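(* Let $d\ge 1$, $\bar{\alpha}>2$ and $\beta_k>0$. Consider the hierarchical model for a random vector $\mathbf{x}_k\in\mathbb{R}^d$ in which $\gamma_k>0$ follows a Gamma distribution with shape $\bar{\alpha}$ and rate $\beta_k$ (density $\frac{\beta_k^{\bar\alpha}}{\Gamma(\bar\alpha)}\gamma_k^{\bar\alpha-1}e^{-\beta_k\gamma_k}$), and, conditionally on $\gamma_k$, $\mathbf{x}_k$ has the probability density $p(\mathbf{x}_k\mid\gamma_k)= c_d\,\gamma_k^d\exp\left(-\gamma_k\|\mathbf{x}_k\|_2\right)$, where $\|\cdot\|_2$ is the Euclidean norm and $c_d>0$ is the normalizing constant (independent of $\gamma_k$). Then the marginal density of $\mathbf{x}_k$ satisfies $p(\mathbf{x}_k)\propto(\beta_k+\|\mathbf{x}_k\|_2)^{-(\bar\alpha+d)}$, and $$\mathbb{E}\left[\mathbf{x}_k\mathbf{x}_k^\top\right]=\frac{(d+1)\beta_k^2}{(\bar\alpha-1)(\bar\alpha-2)}I_d .$$ Consequently, for given $\mathrm{SNR}>1$, positive semidefinite nonzero $\Gamma_\xi\in\mathbb{R}^{m\times m}$, integer $q\ge1$ and nonzero $L_k\in\mathbb{R}^{m\times d}$, the requirement $\mathbb{E}[\mathbf{x}_k\mathbf{x}_k^\top]=\theta_k I_d$ with $\theta_k=\frac{(\mathrm{SNR}-1)\,\mathrm{trace}(\Gamma_\xi)}{q\|L_k\|_F^2}$ holds if and only if $$\beta_k=\sqrt{\frac{(\bar\alpha-1)(\bar\alpha-2)(\mathrm{S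NR}-1)\,\mathrm{trace}(\Gamma_\xi)}{(d+1)q\|L_k\|_F^2}}.$$
   Context: $\|\cdot\|_F$ denotes the Frobenius norm and $I_d$ the $d\times d$ identity matrix. In the application, $L_k$ is the block of $d$ columns of an EEG lead field matrix associated with source location $k$, $\Gamma_\xi$ is the measurement noise covariance, $q$ is the number of active sources, and $\theta_k$ is the prior variance prescribed by a signal-to-noise-ratio-based sensitivity weighting. *)

theory Defs
  imports "HOL-Analysis.Analysis"
begin

definition gamma_pdf :: "real \<Rightarrow> real \<Rightarrow> real \<Rightarrow> real" where
  "gamma_pdf a b g = (if g > 0 then b powr a / Gamma a * g powr (a - 1) * exp (- b * g) else 0)"

definition cnorm :: "('d::finite) itself \<Rightarrow> real" where
  "cnorm _ = 1 / (\<integral>x. exp (- norm (x :: real^'d)) \<partial>lborel)"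

definition cond_pdf :: "real \<Rightarrow> real^'d \<Rightarrow> real" where
  "cond_pdf g x = cnorm TYPE('d) * g ^ CARD('d) * exp (- g * norm x)"

definition marg_pdf :: "real \<Rightarrow> real \<Rightarrow> real^'d::finite \<Rightarrow> real" where
  "marg_pdf a b x = (\<integral>g. gamma_pdf a b g * cond_pdf g x \<partial>lborel)"

definition second_moment :: "real \<Rightarrow> real \<Rightarrow> 'd::finite \<Rightarrow> 'd \<Rightarrow> real" where
  "second_moment a b i j = (\<integral>x. (x $ i) * (x $ j) * marg_pdf a b (x :: real^'d) \<partial>lborel)"

definition frob_norm :: "real^'n^'m \<Rightarrow> real" where
  "frob_norm A = sqrt (\<Sum>i\<in>UNIV. \<Sum>j\<in>UNIV. (A $ i $ j)^2)"

definition psd :: "real^'m^'m \<Rightarrow> bool" where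
  "psd A \<longleftrightarrow> transpose A = A \<and> (\<forall>v. v \<bullet> (A *v v) \<ge> 0)"

end

theory Submission
  imports Defs
begin

(* Integrating out gamma, the product of the Gamma density and the conditional density is a
   multiple of the Gamma kernel gamma^(a+d-1) exp(-(b + |x|) gamma), whose integral is
   Gamma(a+d) (b + |x|)^-(a+d); this is the marginal density.
   For the second moment exchange the integrals. Conditionally on gamma, the substitution
   x = y / gamma gives E[|x|^2 | gamma] = M_2 / (M_0 gamma^2), where M_k is the radial moment
   of exp(-|x|); writing |x|^k exp(-|x|) as an integral over the scale shows
   M_(k+1) = (d + k) M_k, so M_2 / M_0 = d (d + 1). Averaging gamma^-2 over the Gamma law gives
   b^2 / ((a - 1)(a - 2)). Since the marginal is radial, reflecting a coordinate kills the
   off-diagonal entries of E[x x^T] and swapping two coordinates makes the diagonal constant,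
   so each diagonal entry is E|x|^2 / d. *)

definition gamma_kernel :: "real \<Rightarrow> real \<Rightarrow> real \<Rightarrow> real" where
  "gamma_kernel s l g = (if g > 0 then g powr (s - 1) * exp (- l * g) else 0)"

lemma gamma_kernel_measurable [measurable]: "gamma_kernel s l \<in> borel_measurable borel"
  unfolding gamma_kernel_def by measurable

lemma gamma_kernel_nonneg: "gamma_kernel s l g \<ge> 0"
  unfolding gamma_kernel_def by auto

lemma nn_integral_gamma_kernel:
  assumes s: "s > 0" and l: "l > 0"
  shows "(\<integral>\<^sup>+g. ennreal (gamma_kernel s l g) \<partial>lborel) = ennreal (Gamma s * l powr (- s))"
proof -
  have "ennreal (Gamma s) = (\<integral>\<^sup>+t. ennreal (indicator {0..} t * t powr (s - 1) / exp t) \<partial>lborel)"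
    using Gamma_conv_nn_integral_real[OF s] by simp
  also have "\<dots> = ennreal \<bar>l\<bar> * (\<integral>\<^sup>+g. ennreal (indicator {0..} (0 + l * g) * (0 + l * g) powr (s - 1) / exp (0 + l * g)) \<partial>lborel)"
    by (rule nn_integral_real_affine) (use l in auto)
  also have "(\<lambda>g. ennreal (indicator {0..} (0 + l * g) * (0 + l * g) powr (s - 1) / exp (0 + l * g)))
      = (\<lambda>g. ennreal (l powr (s - 1)) * ennreal (gamma_kernel s l g))"
  proof
    fix g :: real
    show "ennreal (indicator {0..} (0 + l * g) * (0 + l * g) powr (s - 1) / exp (0 + l * g))
      = ennreal (l powr (s - 1)) * ennreal (gamma_kernel s l g)"
      using l by (cases "g > 0")
        (auto simp: gamma_kernel_def ennreal_mult'[symmetric] powr_mult exp_minus field_simps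
          indicator_def zero_le_mult_iff)
  qed
  finally have "ennreal (Gamma s) = ennreal (l * l powr (s - 1)) * (\<integral>\<^sup>+g. ennreal (gamma_kernel s l g) \<partial>lborel)"
    using l by (simp add: nn_integral_cmult ennreal_mult mult.assoc)
  also have "l * l powr (s - 1) = l powr s"
    using l by (simp add: powr_diff)
  finally have "ennreal (l powr (- s)) * ennreal (Gamma s)
      = ennreal (l powr (- s) * l powr s) * (\<integral>\<^sup>+g. ennreal (gamma_kernel s l g) \<partial>lborel)"
    using l by (simp add: ennreal_mult mult.assoc)
  then show ?thesis
    using l s by (simp add: ennreal_mult'[symmetric] powr_minus mult.commute)
qed

lemma integral_gamma_kernel:
  assumes "s > 0" and "l > 0"
  shows "(\<integral>g. gamma_kernel s l g \<partial>lborel) = Gamma s * l powr (- s)"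
  using nn_integral_eq_integrable[of "gamma_kernel s l" lborel "Gamma s * l powr (- s)"]
    nn_integral_gamma_kernel[OF assms] assms
  by (auto simp: gamma_kernel_nonneg)

lemma nn_integral_exp_atLeast:
  fixes c l :: real
  assumes l: "l > 0"
  shows "(\<integral>\<^sup>+u. ennreal (exp (- l * u)) * indicator {c..} u \<partial>lborel) = ennreal (exp (- l * c) / l)"
proof -
  have "LIM u at_top. l * u :> at_top"
    by (rule filterlim_tendsto_pos_mult_at_top[OF tendsto_const l filterlim_ident])
  then have "LIM u at_top. - l * u :> at_bot"
    using filterlim_uminus_at_top by auto
  then have "((\<lambda>u. exp (- l * u)) \<longlongrightarrow> 0) at_top"
    using exp_at_bot filterlim_compose by blast
  then have "((\<lambda>u. - exp (- l * u) / l) \<longlongrightarrow> 0) at_top"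
    using tendsto_minus[OF tendsto_divide_zero] by fastforce
  then have "(\<integral>\<^sup>+u. ennreal (exp (- l * u)) * indicator {c..} u \<partial>lborel) = ennreal (0 - (- exp (- l * c) / l))"
    using l by (intro nn_integral_FTC_atLeast) (auto intro!: derivative_eq_intros)
  then show ?thesis by simp
qed

lemma nn_integral_powr_atLeast_1:
  fixes p :: real
  assumes p: "p > 1"
  shows "(\<integral>\<^sup>+u. ennreal (u powr (- p)) * indicator {1..} u \<partial>lborel) = ennreal (1 / (p - 1))"
proof -
  have "((\<lambda>u. u powr (1 - p)) \<longlongrightarrow> 0) at_top"
    using p by (intro tendsto_neg_powr filterlim_ident) auto
  then have "((\<lambda>u. - (u powr (1 - p)) / (p - 1)) \<longlongrightarrow> 0) at_top"
    using tendsto_minus[OF tendsto_divide_zero] by fastforce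
  moreover have "((\<lambda>u. - (u powr (1 - p)) / (p - 1)) has_real_derivative u powr (- p)) (at u)"
    if "1 \<le> u" for u
  proof -
    have "((\<lambda>u. - (u powr (1 - p)) / (p - 1)) has_real_derivative - ((1 - p) * u powr (1 - p - 1)) / (p - 1)) (at u)"
      using that by (intro DERIV_cdivide DERIV_minus has_real_derivative_powr) auto
    then show ?thesis
      by (rule DERIV_cong) (use p in \<open>simp add: field_simps algebra_simps\<close>)
  qed
  ultimately have "(\<integral>\<^sup>+u. ennreal (u powr (- p)) * indicator {1..} u \<partial>lborel)
      = ennreal (0 - (- (1 powr (1 - p)) / (p - 1)))"
    by (intro nn_integral_FTC_atLeast) auto
  then show ?thesis by simp
qed

lemma nn_integral_lborel_scaleR:
  fixes f :: "'a::euclidean_space \<Rightarrow> ennreal"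
  assumes c: "c > 0" and [measurable]: "f \<in> borel_measurable borel"
  shows "(\<integral>\<^sup>+x. f x \<partial>lborel) = ennreal (c ^ DIM('a)) * (\<integral>\<^sup>+x. f (c *\<^sub>R x) \<partial>lborel)"
proof -
  have "(lborel :: 'a measure) = density (distr lborel borel (\<lambda>x. 0 + c *\<^sub>R x)) (\<lambda>_. \<bar>c\<bar> ^ DIM('a))"
    using c by (intro lborel_affine) simp
  then have "(lborel :: 'a measure) = density (distr lborel borel (\<lambda>x. c *\<^sub>R x)) (\<lambda>_. ennreal (c ^ DIM('a)))"
    using c by simp
  then have "(\<integral>\<^sup>+x. f x \<partial>lborel) = (\<integral>\<^sup>+x. f x \<partial>density (distr lborel borel (\<lambda>x. c *\<^sub>R x)) (\<lambda>_. ennreal (c ^ DIM('a))))"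
    by (rule arg_cong)
  also have "\<dots> = ennreal (c ^ DIM('a)) * (\<integral>\<^sup>+x. f (c *\<^sub>R x) \<partial>lborel)"
    by (simp add: nn_integral_density nn_integral_distr nn_integral_cmult)
  finally show ?thesis .
qed

definition exp_norm_moment :: "'a::euclidean_space itself \<Rightarrow> nat \<Rightarrow> ennreal" where
  "exp_norm_moment _ k = (\<integral>\<^sup>+x. ennreal (norm (x :: 'a) ^ k * exp (- norm x)) \<partial>lborel)"

lemma exp_norm_moment_scaled:
  assumes t: "t > 0"
  shows "(\<integral>\<^sup>+x. ennreal (norm (x :: 'a::euclidean_space) ^ k * exp (- t * norm x)) \<partial>lborel)
    = exp_norm_moment TYPE('a) k * ennreal (t powr - real (DIM('a) + k))"
proof -
  let ?I = "\<integral>\<^sup>+x. ennreal (norm (x :: 'a) ^ k * exp (- t * norm x)) \<partial>lborel"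
  have "exp_norm_moment TYPE('a) k
      = ennreal (t ^ DIM('a)) * (\<integral>\<^sup>+x. ennreal (norm (t *\<^sub>R (x::'a)) ^ k * exp (- norm (t *\<^sub>R x))) \<partial>lborel)"
    unfolding exp_norm_moment_def by (rule nn_integral_lborel_scaleR[OF t]) measurable
  also have "(\<lambda>x::'a. ennreal (norm (t *\<^sub>R x) ^ k * exp (- norm (t *\<^sub>R x))))
      = (\<lambda>x. ennreal (t ^ k) * ennreal (norm x ^ k * exp (- t * norm x)))"
    using t by (simp add: ennreal_mult'[symmetric] power_mult_distrib mult.assoc)
  finally have "exp_norm_moment TYPE('a) k = ennreal (t ^ (DIM('a) + k)) * ?I"
    using t by (simp add: nn_integral_cmult power_add ennreal_mult' mult.assoc)
  then have "exp_norm_moment TYPE('a) k * ennreal (t powr - real (DIM('a) + k))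
      = ennreal (t ^ (DIM('a) + k) * t powr - real (DIM('a) + k)) * ?I"
    using t by (simp add: ennreal_mult mult_ac)
  also have "t ^ (DIM('a) + k) * t powr - real (DIM('a) + k) = 1"
    using t by (simp add: powr_minus powr_realpow[symmetric] del: of_nat_add)
  finally show ?thesis by simp
qed

text \<open>Writing \<open>|x|^k e^{-|x|} = \<integral>\<^sub>1\<^sup>\<infinity> |x|^{k+1} e^{-u|x|} du\<close> and exchanging the integrals, the inner
  integral is \<open>u^{-(d+k+1)}\<close> times the next moment by scaling (\<open>d = DIM('a)\<close>).\<close>
lemma exp_norm_moment_Suc:
  "exp_norm_moment TYPE('a::euclidean_space) (Suc k) = ennreal (real (DIM('a) + k)) * exp_norm_moment TYPE('a) k"
proof -
  let ?n = "real (DIM('a) + k)"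
  have "exp_norm_moment TYPE('a) k
      = (\<integral>\<^sup>+x. (\<integral>\<^sup>+u. ennreal (norm (x::'a) ^ Suc k * exp (- norm x * u)) * indicator {1..} u \<partial>lborel) \<partial>lborel)"
    unfolding exp_norm_moment_def
  proof (rule nn_integral_cong_AE)
    show "AE x in lborel. ennreal (norm (x::'a) ^ k * exp (- norm x))
        = (\<integral>\<^sup>+u. ennreal (norm x ^ Suc k * exp (- norm x * u)) * indicator {1..} u \<partial>lborel)"
      using AE_lborel_singleton[of "0::'a"]
    proof eventually_elim
      case (elim x)
      have "ennreal (norm x ^ k * exp (- norm x)) = ennreal (norm x ^ Suc k) * ennreal (exp (- norm x * 1) / norm x)"
        using elim by (simp add: ennreal_mult'[symmetric])
      also have "ennreal (exp (- norm x * 1) / norm x) = (\<integral>\<^sup>+u. ennreal (exp (- norm x * u)) * indicator {1..} u \<partial>lborel)"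
        by (rule nn_integral_exp_atLeast[symmetric]) (use elim in simp)
      also have "ennreal (norm x ^ Suc k) * \<dots>
          = (\<integral>\<^sup>+u. ennreal (norm x ^ Suc k * exp (- norm x * u)) * indicator {1..} u \<partial>lborel)"
        by (simp add: nn_integral_cmult[symmetric] ennreal_mult' mult.assoc)
      finally show ?case .
    qed
  qed
  also have "\<dots> = (\<integral>\<^sup>+u. (\<integral>\<^sup>+x. ennreal (norm (x::'a) ^ Suc k * exp (- norm x * u)) * indicator {1..} u \<partial>lborel) \<partial>lborel)"
    by (rule lborel_pair.Fubini'[symmetric]) measurable
  also have "\<dots> = (\<integral>\<^sup>+u. exp_norm_moment TYPE('a) (Suc k) * (ennreal (u powr - (?n + 1)) * indicator {1..} u) \<partial>lborel)"
  proof (rule nn_integral_cong)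
    fix u :: real
    show "(\<integral>\<^sup>+x. ennreal (norm (x::'a) ^ Suc k * exp (- norm x * u)) * indicator {1..} u \<partial>lborel)
        = exp_norm_moment TYPE('a) (Suc k) * (ennreal (u powr - (?n + 1)) * indicator {1..} u)"
      using exp_norm_moment_scaled[of u "Suc k", where 'a='a]
      by (cases "u \<ge> 1") (simp_all add: nn_integral_multc mult.assoc mult.commute[of _ u] add.commute)
  qed
  also have "\<dots> = exp_norm_moment TYPE('a) (Suc k) * ennreal (1 / ?n)"
    using nn_integral_powr_atLeast_1[of "?n + 1"] by (simp add: nn_integral_cmult add_pos_nonneg)
  finally have "ennreal ?n * exp_norm_moment TYPE('a) k
      = exp_norm_moment TYPE('a) (Suc k) * ennreal (1 / ?n * ?n)"
    by (simp add: ennreal_mult'[symmetric] mult_ac del: of_nat_add)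
  moreover have "1 / ?n * ?n = 1"
    using DIM_positive[where 'a='a] by (simp del: of_nat_add)
  ultimately show ?thesis by simp
qed

text \<open>Layer cake: \<open>e^{-|x|} = \<integral>\<^bsub>|x|\<^esub>\<^sup>\<infinity> e^{-s} ds\<close>, and the set of \<open>x\<close> with \<open>|x| \<le> s\<close> is a ball of volume
  \<open>V s^d\<close>, which leaves the Gamma integral \<open>V \<integral>\<^sub>0\<^sup>\<infinity> s^d e^{-s} ds = V d!\<close>.\<close>
lemma exp_norm_moment_0:
  "exp_norm_moment TYPE('a::euclidean_space) 0 = ennreal (unit_ball_vol DIM('a) * fact DIM('a))"
proof -
  let ?n = "DIM('a)" and ?V = "unit_ball_vol (real DIM('a))"
  have "exp_norm_moment TYPE('a) 0
      = (\<integral>\<^sup>+x. (\<integral>\<^sup>+s. ennreal (exp (- s)) * indicator {norm (x::'a)..} s \<partial>lborel) \<partial>lborel)"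
    unfolding exp_norm_moment_def by (simp add: nn_integral_exp_atLeast[of 1, simplified])
  also have "\<dots> = (\<integral>\<^sup>+s. (\<integral>\<^sup>+x. ennreal (exp (- s)) * indicator (cball 0 s) (x::'a) \<partial>lborel) \<partial>lborel)"
    by (subst lborel_pair.Fubini') (auto intro!: nn_integral_cong simp: indicator_def)
  also have "\<dots> = (\<integral>\<^sup>+s. ennreal ?V * ennreal (indicator {0..} s * s powr (real (?n + 1) - 1) / exp s) \<partial>lborel)"
  proof (rule nn_integral_cong)
    fix s :: real
    show "(\<integral>\<^sup>+x. ennreal (exp (- s)) * indicator (cball 0 s) (x::'a) \<partial>lborel)
        = ennreal ?V * ennreal (indicator {0..} s * s powr (real (?n + 1) - 1) / exp s)"
    proof (cases "s \<ge> 0")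
      case True
      have "s powr (real (?n + 1) - 1) = s ^ ?n"
        using True by (cases "s = 0") (simp_all add: powr_realpow)
      then show ?thesis
        using True emeasure_cball[where c="0::'a" and r=s]
        by (simp add: nn_integral_cmult_indicator ennreal_mult'[symmetric] exp_minus field_simps del: of_nat_add)
    qed simp
  qed
  also have "\<dots> = ennreal ?V * ennreal (Gamma (real (?n + 1)))"
    by (simp add: nn_integral_cmult Gamma_conv_nn_integral_real del: of_nat_add)
  also have "\<dots> = ennreal (?V * fact ?n)"
    by (simp add: Gamma_fact[where 'a=real, symmetric] ennreal_mult' add.commute)
  finally show ?thesis .
qed

lemma exp_norm_moment_eq:
  "exp_norm_moment TYPE('a::euclidean_space) k
    = ennreal (unit_ball_vol DIM('a) * fact DIM('a) * pochhammer (real DIM('a)) k)"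
proof (induction k)
  case 0
  show ?case by (simp add: exp_norm_moment_0)
next
  case (Suc k)
  then show ?case
    by (simp add: exp_norm_moment_Suc pochhammer_Suc ennreal_mult'[symmetric] mult_ac pochhammer_nonneg del: of_nat_add)
qed

lemma cnorm_eq: "cnorm TYPE('d::finite) = 1 / (unit_ball_vol CARD('d) * fact CARD('d))"
proof -
  have "(\<integral>x. exp (- norm (x::real^'d)) \<partial>lborel) = enn2real (exp_norm_moment TYPE(real^'d) 0)"
    unfolding exp_norm_moment_def by (simp add: integral_eq_nn_integral)
  then show ?thesis
    unfolding cnorm_def exp_norm_moment_0 by simp
qed

lemma cond_pdf_nonneg: "g \<ge> 0 \<Longrightarrow> cond_pdf g x \<ge> 0"
  unfolding cond_pdf_def cnorm_eq by simp

lemma nn_integral_norm_sq_cond_pdf: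
  assumes g: "g > 0"
  shows "(\<integral>\<^sup>+x. ennreal (norm (x::real^'d::finite) ^ 2 * cond_pdf g x) \<partial>lborel)
    = ennreal (real CARD('d) * (real CARD('d) + 1) / g\<^sup>2)"
proof -
  let ?n = "CARD('d)" and ?Z = "unit_ball_vol CARD('d) * fact CARD('d)"
  have V: "unit_ball_vol CARD('d) \<noteq> 0"
    using unit_ball_vol_pos[of "real CARD('d)"] by linarith
  have M2: "exp_norm_moment TYPE(real^'d) 2 = ennreal (?Z * (real ?n * (real ?n + 1)))"
    by (simp add: exp_norm_moment_eq pochhammer_Suc numeral_2_eq_2 mult_ac)
  have I: "(\<integral>\<^sup>+x. ennreal (norm (x::real^'d) ^ 2 * exp (- g * norm x)) \<partial>lborel)
      = ennreal (?Z * (real ?n * (real ?n + 1)) * g powr - real (?n + 2))"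
    unfolding exp_norm_moment_scaled[OF g] M2 using g by (simp add: ennreal_mult)
  have "(\<integral>\<^sup>+x. ennreal (norm (x::real^'d) ^ 2 * cond_pdf g x) \<partial>lborel)
      = ennreal (g ^ ?n / ?Z) * (\<integral>\<^sup>+x. ennreal (norm (x::real^'d) ^ 2 * exp (- g * norm x)) \<partial>lborel)"
    using g by (simp add: cond_pdf_def cnorm_eq nn_integral_cmult[symmetric] ennreal_mult'[symmetric] mult_ac)
  also have "\<dots> = ennreal (g ^ ?n / ?Z * (?Z * (real ?n * (real ?n + 1)) * g powr - real (?n + 2)))"
    unfolding I using g by (simp add: ennreal_mult'[symmetric])
  also have "g ^ ?n / ?Z * (?Z * (real ?n * (real ?n + 1)) * g powr - real (?n + 2)) = real ?n * (real ?n + 1) / g\<^sup>2"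
  proof -
    have "g ^ ?n * g powr - real (?n + 2) = g powr - 2"
      using g by (simp add: powr_realpow[symmetric] powr_add[symmetric])
    moreover have "g ^ ?n / ?Z * (?Z * (real ?n * (real ?n + 1)) * g powr - real (?n + 2))
        = real ?n * (real ?n + 1) * (g ^ ?n * g powr - real (?n + 2))"
      using V by (simp del: of_nat_add)
    ultimately show ?thesis
      using g by (simp add: powr_minus_divide powr_numeral del: of_nat_add)
  qed
  finally show ?thesis .
qed

lemma Gamma_eq_minus_2:
  fixes a :: real
  assumes "a > 2"
  shows "Gamma a = (a - 1) * (a - 2) * Gamma (a - 2)"
  using assms Gamma_plus1[of "a - 2"] Gamma_plus1[of "a - 1"]
  by (simp add: nonpos_Ints_def)

lemma gamma_pdf_measurable [measurable]: "gamma_pdf a b \<in> borel_measurable borel"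
  unfolding gamma_pdf_def by measurable

lemma cond_pdf_measurable [measurable (raw)]:
  assumes [measurable]: "f \<in> borel_measurable M" "h \<in> borel_measurable M"
  shows "(\<lambda>y. cond_pdf (f y) (h y)) \<in> borel_measurable M"
  unfolding cond_pdf_def by measurable

lemma gamma_pdf_eq_kernel: "gamma_pdf a b g = b powr a / Gamma a * gamma_kernel a b g"
  unfolding gamma_pdf_def gamma_kernel_def by simp

lemma gamma_pdf_nonneg: "a > 0 \<Longrightarrow> gamma_pdf a b g \<ge> 0"
  unfolding gamma_pdf_def by simp

lemma nn_integral_gamma_pdf_div_sq:
  assumes a: "a > 2" and b: "b > 0"
  shows "(\<integral>\<^sup>+g. ennreal (gamma_pdf a b g / g\<^sup>2) \<partial>lborel) = ennreal (b\<^sup>2 / ((a - 1) * (a - 2)))"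
proof -
  define C where "C = b powr a / Gamma a"
  have C: "C \<ge> 0"
    using a unfolding C_def by simp
  have "gamma_pdf a b g / g\<^sup>2 = C * gamma_kernel (a - 2) b g" for g
  proof (cases "g > 0")
    case True
    then have "gamma_pdf a b g / g\<^sup>2 = b powr a / Gamma a * (g powr (a - 1) / g\<^sup>2 * exp (- b * g))"
      by (simp add: gamma_pdf_def)
    also have "g powr (a - 1) / g\<^sup>2 = g powr (a - 2 - 1)"
      using True by (simp add: powr_diff powr_numeral power2_eq_square power3_eq_cube)
    finally show ?thesis
      using True by (simp add: gamma_kernel_def C_def)
  qed (simp add: gamma_pdf_def gamma_kernel_def)
  then have "(\<integral>\<^sup>+g. ennreal (gamma_pdf a b g / g\<^sup>2) \<partial>lborel)
      = ennreal (C * (Gamma (a - 2) * b powr - (a - 2)))"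
    using a b C by (simp add: ennreal_mult' gamma_kernel_nonneg nn_integral_cmult nn_integral_gamma_kernel)
  also have "C * (Gamma (a - 2) * b powr - (a - 2)) = b\<^sup>2 / ((a - 1) * (a - 2))"
  proof -
    have "Gamma (a - 2) \<noteq> 0"
      using a by (intro Gamma_nonzero) (auto simp: nonpos_Ints_def)
    then have "C * (Gamma (a - 2) * b powr - (a - 2)) = b powr a * b powr - (a - 2) / ((a - 1) * (a - 2))"
      unfolding C_def Gamma_eq_minus_2[OF a] by simp
    also have "b powr a * b powr - (a - 2) = b\<^sup>2"
      using b by (simp add: powr_add[symmetric] powr_numeral)
    finally show ?thesis .
  qed
  finally show ?thesis .
qed

lemma gamma_pdf_mult_cond_pdf:
  "gamma_pdf a b g * cond_pdf g (x::real^'d::finite)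
    = b powr a / Gamma a * cnorm TYPE('d) * gamma_kernel (a + CARD('d)) (b + norm x) g"
proof (cases "g > 0")
  case True
  then have "g powr (a - 1) * g ^ CARD('d) = g powr (a - 1 + CARD('d))"
    by (simp add: powr_realpow[symmetric] powr_add)
  also have "a - 1 + CARD('d) = a + CARD('d) - 1"
    by simp
  moreover have "exp (- b * g) * exp (- g * norm x) = exp (- (b + norm x) * g)"
    by (simp add: exp_add[symmetric] algebra_simps)
  moreover have "gamma_pdf a b g * cond_pdf g x = (b powr a / Gamma a * cnorm TYPE('d))
      * ((g powr (a - 1) * g ^ CARD('d)) * (exp (- b * g) * exp (- g * norm x)))"
    using True unfolding gamma_pdf_def cond_pdf_def by (simp only: if_True mult_ac)
  ultimately show ?thesis
    using True unfolding gamma_kernel_def by simp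
qed (simp add: gamma_pdf_def gamma_kernel_def)

lemma marg_pdf_eq:
  assumes a: "a > 0" and b: "b > 0"
  shows "marg_pdf a b (x::real^'d::finite)
    = b powr a / Gamma a * cnorm TYPE('d) * Gamma (a + CARD('d)) * (b + norm x) powr - (a + CARD('d))"
  using a b unfolding marg_pdf_def gamma_pdf_mult_cond_pdf
  by (simp add: integral_gamma_kernel add_pos_nonneg)

lemma marg_pdf_measurable [measurable]:
  assumes "a > 0" and "b > 0"
  shows "(marg_pdf a b :: real^'d::finite \<Rightarrow> real) \<in> borel_measurable borel"
  unfolding marg_pdf_eq[OF assms, abs_def] by measurable

lemma marg_pdf_nonneg:
  assumes "a > 0" and "b > 0"
  shows "marg_pdf a b (x::real^'d::finite) \<ge> 0"
  using assms by (simp add: marg_pdf_eq cnorm_eq)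

lemma ennreal_marg_pdf:
  assumes a: "a > 0" and b: "b > 0"
  shows "ennreal (marg_pdf a b (x::real^'d::finite)) = (\<integral>\<^sup>+g. ennreal (gamma_pdf a b g * cond_pdf g x) \<partial>lborel)"
proof -
  define C where "C = b powr a / Gamma a * cnorm TYPE('d)"
  have "C \<ge> 0"
    using a unfolding C_def cnorm_eq by simp
  moreover have "b + norm x > 0"
    using b by (simp add: add_pos_nonneg)
  ultimately show ?thesis
    using a unfolding gamma_pdf_mult_cond_pdf marg_pdf_eq[OF a b] C_def[symmetric]
    by (simp add: ennreal_mult' gamma_kernel_nonneg nn_integral_cmult nn_integral_gamma_kernel mult.assoc)
qed

lemma nn_integral_norm_sq_marg_pdf:
  assumes a: "a > 2" and b: "b > 0"
  shows "(\<integral>\<^sup>+x. ennreal (norm (x::real^'d::finite) ^ 2 * marg_pdf a b x) \<partial>lborel)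
    = ennreal (real CARD('d) * ((real CARD('d) + 1) * b\<^sup>2 / ((a - 1) * (a - 2))))"
proof -
  let ?n = "real CARD('d)"
  have a0: "a > 0" using a by simp
  have joint_nonneg: "gamma_pdf a b g * cond_pdf g x \<ge> 0" for g and x :: "real^'d"
    by (cases "g > 0") (simp_all add: gamma_pdf_def a0 cond_pdf_nonneg)
  have "(\<integral>\<^sup>+x. ennreal (norm (x::real^'d) ^ 2 * marg_pdf a b x) \<partial>lborel)
      = (\<integral>\<^sup>+x. (\<integral>\<^sup>+g. ennreal (norm (x::real^'d) ^ 2 * (gamma_pdf a b g * cond_pdf g x)) \<partial>lborel) \<partial>lborel)"
  proof (rule nn_integral_cong)
    fix x :: "real^'d"
    have "(\<lambda>g. ennreal (gamma_pdf a b g * cond_pdf g x)) \<in> borel_measurable lborel"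
      by measurable
    then show "ennreal (norm x ^ 2 * marg_pdf a b x)
        = (\<integral>\<^sup>+g. ennreal (norm x ^ 2 * (gamma_pdf a b g * cond_pdf g x)) \<partial>lborel)"
      using a0 b joint_nonneg by (simp add: ennreal_mult' ennreal_marg_pdf nn_integral_cmult)
  qed
  also have "\<dots> = (\<integral>\<^sup>+g. (\<integral>\<^sup>+x. ennreal (norm (x::real^'d) ^ 2 * (gamma_pdf a b g * cond_pdf g x)) \<partial>lborel) \<partial>lborel)"
    by (rule lborel_pair.Fubini'[symmetric]) measurable
  also have "\<dots> = (\<integral>\<^sup>+g. ennreal (?n * (?n + 1)) * ennreal (gamma_pdf a b g / g\<^sup>2) \<partial>lborel)"
  proof (rule nn_integral_cong)
    fix g :: real
    show "(\<integral>\<^sup>+x. ennreal (norm (x::real^'d) ^ 2 * (gamma_pdf a b g * cond_pdf g x)) \<partial>lborel)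
        = ennreal (?n * (?n + 1)) * ennreal (gamma_pdf a b g / g\<^sup>2)"
    proof (cases "g > 0")
      case True
      have "(\<integral>\<^sup>+x. ennreal (norm (x::real^'d) ^ 2 * (gamma_pdf a b g * cond_pdf g x)) \<partial>lborel)
          = (\<integral>\<^sup>+x. ennreal (gamma_pdf a b g) * ennreal (norm (x::real^'d) ^ 2 * cond_pdf g x) \<partial>lborel)"
        using a0 by (intro nn_integral_cong) (simp add: gamma_pdf_nonneg ennreal_mult'[symmetric] mult_ac)
      also have "\<dots> = ennreal (gamma_pdf a b g) * (\<integral>\<^sup>+x. ennreal (norm (x::real^'d) ^ 2 * cond_pdf g x) \<partial>lborel)"
        by (rule nn_integral_cmult) measurable
      finally show ?thesis
        using True a0 by (simp add: nn_integral_norm_sq_cond_pdf gamma_pdf_nonneg ennreal_mult'[symmetric])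
    qed (simp add: gamma_pdf_def)
  qed
  also have "\<dots> = ennreal (?n * (?n + 1)) * ennreal (b\<^sup>2 / ((a - 1) * (a - 2)))"
    unfolding nn_integral_gamma_pdf_div_sq[OF a b, symmetric]
    by (rule nn_integral_cmult) measurable
  finally show ?thesis
    by (simp add: ennreal_mult'[symmetric] mult_ac)
qed

lemma
  assumes a: "a > 2" and b: "b > 0"
  shows integrable_norm_sq_marg_pdf: "integrable lborel (\<lambda>x::real^'d::finite. norm x ^ 2 * marg_pdf a b x)"
    and integral_norm_sq_marg_pdf: "(\<integral>x. norm x ^ 2 * marg_pdf a b (x::real^'d) \<partial>lborel)
      = real CARD('d) * ((real CARD('d) + 1) * b\<^sup>2 / ((a - 1) * (a - 2)))"
proof -
  have a0: "a > 0" using a by simp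
  have "0 \<le> real CARD('d) * ((real CARD('d) + 1) * b\<^sup>2 / ((a - 1) * (a - 2)))"
    using a by simp
  then show "integrable lborel (\<lambda>x::real^'d::finite. norm x ^ 2 * marg_pdf a b x)"
    and "(\<integral>x. norm x ^ 2 * marg_pdf a b (x::real^'d) \<partial>lborel)
      = real CARD('d) * ((real CARD('d) + 1) * b\<^sup>2 / ((a - 1) * (a - 2)))"
    using nn_integral_eq_integrable[of "\<lambda>x::real^'d. norm x ^ 2 * marg_pdf a b x" lborel
        "real CARD('d) * ((real CARD('d) + 1) * b\<^sup>2 / ((a - 1) * (a - 2)))"]
      nn_integral_norm_sq_marg_pdf[OF a b, where 'd='d] marg_pdf_nonneg[OF a0 b, where 'd='d]
      marg_pdf_measurable[OF a0 b, where 'd='d]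
    by simp_all
qed

lemma integrable_coord_mult_marg_pdf:
  assumes a: "a > 2" and b: "b > 0"
  shows "integrable lborel (\<lambda>x::real^'d::finite. x $ i * x $ j * marg_pdf a b x)"
proof (rule Bochner_Integration.integrable_bound[OF integrable_norm_sq_marg_pdf[OF a b]])
  have a0: "a > 0" using a by simp
  note [measurable] = marg_pdf_measurable[OF a0 b]
  show "(\<lambda>x::real^'d. x $ i * x $ j * marg_pdf a b x) \<in> borel_measurable lborel"
    by measurable
  show "AE x in lborel. norm (x $ i * x $ j * marg_pdf a b x) \<le> norm (norm x ^ 2 * marg_pdf a b (x::real^'d))"
  proof (intro AE_I2)
    fix x :: "real^'d"
    have "\<bar>x $ i\<bar> * \<bar>x $ j\<bar> \<le> norm x * norm x"
      by (intro mult_mono component_le_norm_cart) auto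
    then show "norm (x $ i * x $ j * marg_pdf a b x) \<le> norm (norm x ^ 2 * marg_pdf a b x)"
      using marg_pdf_nonneg[OF a0 b, of x]
      by (simp add: abs_mult power2_eq_square mult_right_mono)
  qed
qed

lemma marg_pdf_norm_cong:
  fixes x y :: "real^'d::finite"
  shows "norm x = norm y \<Longrightarrow> marg_pdf a b x = marg_pdf a b y"
  unfolding marg_pdf_def cond_pdf_def by simp

lemma Basis_cart_range: "(Basis :: (real^'n) set) = range (\<lambda>k. axis k (1::real))"
  by (auto simp: Basis_vec_def)

lemma prod_Basis_cart: "(\<Prod>b\<in>(Basis :: (real^'n) set). f b) = (\<Prod>k\<in>UNIV. f (axis k 1))"
  unfolding Basis_cart_range by (subst prod.reindex) (auto simp: inj_on_def axis_eq_axis)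

lemma lborel_cart_eqI:
  fixes M :: "(real^'n) measure"
  assumes "\<And>l u. (\<And>k. l $ k \<le> u $ k) \<Longrightarrow> emeasure M (box l u) = (\<Prod>k\<in>UNIV. u $ k - l $ k)"
    and "sets M = sets borel"
  shows "lborel = M"
proof (rule lborel_eqI)
  fix l u :: "real^'n"
  assume "\<And>b. b \<in> Basis \<Longrightarrow> l \<bullet> b \<le> u \<bullet> b"
  then have "\<And>k. l $ k \<le> u $ k"
    by (auto simp: Basis_cart_range cart_eq_inner_axis)
  then show "emeasure M (box l u) = (\<Prod>b\<in>Basis. (u - l) \<bullet> b)"
    using assms(1) by (simp add: prod_Basis_cart cart_eq_inner_axis[symmetric])
qed (fact assms(2))

lemma emeasure_lborel_box_cart:
  fixes l u :: "real^'n"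
  assumes "\<And>k. l $ k \<le> u $ k"
  shows "emeasure lborel (box l u) = (\<Prod>k\<in>UNIV. u $ k - l $ k)"
proof -
  have "\<And>b. b \<in> Basis \<Longrightarrow> l \<bullet> b \<le> u \<bullet> b"
    using assms by (auto simp: Basis_cart_range cart_eq_inner_axis[symmetric])
  then show ?thesis
    by (simp add: prod_Basis_cart cart_eq_inner_axis[symmetric])
qed

lemma measurable_permute_coords [measurable]: "(\<lambda>x::real^'n. \<chi> k. x $ p k) \<in> borel_measurable borel"
  by (intro borel_measurable_continuous_onI continuous_on_vec_lambda continuous_intros)

lemma measurable_negate_coord [measurable]:
  "(\<lambda>x::real^'n. \<chi> k. if k = i then - x $ k else x $ k) \<in> borel_measurable borel"
proof (intro borel_measurable_continuous_onI continuous_on_vec_lambda)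
  fix k :: 'n
  show "continuous_on UNIV (\<lambda>x::real^'n. if k = i then - x $ k else x $ k)"
    by (cases "k = i") (auto intro!: continuous_intros)
qed

lemma lborel_distr_permute_coords:
  fixes p :: "'n::finite \<Rightarrow> 'n"
  assumes p: "bij p"
  shows "distr lborel borel (\<lambda>x::real^'n. \<chi> k. x $ p k) = lborel"
proof (rule lborel_cart_eqI[symmetric])
  fix l u :: "real^'n"
  assume le: "\<And>k. l $ k \<le> u $ k"
  let ?q = "inv p"
  have "(\<lambda>x::real^'n. \<chi> k. x $ p k) -` box l u = box (\<chi> k. l $ ?q k) (\<chi> k. u $ ?q k)"
  proof (rule set_eqI)
    fix x :: "real^'n"
    have "(\<forall>k. l $ k < x $ p k \<and> x $ p k < u $ k) \<longleftrightarrow> (\<forall>k. l $ ?q k < x $ k \<and> x $ k < u $ ?q k)"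
      using p by (metis bij_inv_eq_iff)
    then show "x \<in> (\<lambda>x. \<chi> k. x $ p k) -` box l u \<longleftrightarrow> x \<in> box (\<chi> k. l $ ?q k) (\<chi> k. u $ ?q k)"
      by (simp add: mem_box_cart)
  qed
  then have "emeasure (distr lborel borel (\<lambda>x::real^'n. \<chi> k. x $ p k)) (box l u)
      = emeasure lborel (box (\<chi> k. l $ ?q k) (\<chi> k. u $ ?q k))"
    by (simp add: emeasure_distr)
  also have "\<dots> = (\<Prod>k\<in>UNIV. u $ ?q k - l $ ?q k)"
    using le by (subst emeasure_lborel_box_cart) auto
  also have "\<dots> = (\<Prod>k\<in>UNIV. u $ k - l $ k)"
  proof -
    have "bij_betw ?q UNIV UNIV"
      using bij_imp_bij_inv[OF p] by (simp add: bij_def bij_betw_def)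
    then show ?thesis
      using prod.reindex_bij_betw[of ?q UNIV UNIV "\<lambda>k. u $ k - l $ k"] by simp
  qed
  finally show "emeasure (distr lborel borel (\<lambda>x::real^'n. \<chi> k. x $ p k)) (box l u) = (\<Prod>k\<in>UNIV. u $ k - l $ k)" .
qed simp

lemma lborel_distr_negate_coord:
  "distr lborel borel (\<lambda>x::real^'n. \<chi> k. if k = i then - x $ k else x $ k) = lborel"
proof (rule lborel_cart_eqI[symmetric])
  fix l u :: "real^'n"
  assume le: "\<And>k. l $ k \<le> u $ k"
  define l' where "l' = (\<chi> k. if k = i then - u $ k else l $ k)"
  define u' where "u' = (\<chi> k. if k = i then - l $ k else u $ k)"
  have "(\<lambda>x::real^'n. \<chi> k. if k = i then - x $ k else x $ k) -` box l u = box l' u'"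
    by (auto simp: mem_box_cart l'_def u'_def split: if_splits) (metis neg_less_iff_less minus_less_iff)+
  then have "emeasure (distr lborel borel (\<lambda>x::real^'n. \<chi> k. if k = i then - x $ k else x $ k)) (box l u)
      = emeasure lborel (box l' u')"
    by (simp add: emeasure_distr)
  also have "\<dots> = (\<Prod>k\<in>UNIV. u' $ k - l' $ k)"
    using le by (subst emeasure_lborel_box_cart) (auto simp: l'_def u'_def)
  also have "\<dots> = (\<Prod>k\<in>UNIV. u $ k - l $ k)"
    by (rule arg_cong[where f=ennreal], rule prod.cong) (auto simp: l'_def u'_def)
  finally show "emeasure (distr lborel borel (\<lambda>x::real^'n. \<chi> k. if k = i then - x $ k else x $ k)) (box l u)
      = (\<Prod>k\<in>UNIV. u $ k - l $ k)" .
qed simp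

lemma integral_lborel_invariant:
  fixes f :: "'a::euclidean_space \<Rightarrow> real"
  assumes "distr lborel borel T = lborel" and "T \<in> borel_measurable borel" and "f \<in> borel_measurable borel"
  shows "(\<integral>x. f (T x) \<partial>lborel) = (\<integral>x. f x \<partial>lborel)"
  using integral_distr[of T lborel borel f] assms by simp

lemma second_moment_offdiag:
  assumes a: "a > 2" and b: "b > 0" and ij: "i \<noteq> j"
  shows "second_moment a b i (j::'d::finite) = 0"
proof -
  let ?R = "\<lambda>x::real^'d. \<chi> k. if k = i then - x $ k else x $ k"
  have a0: "a > 0" using a by simp
  note [measurable] = marg_pdf_measurable[OF a0 b]
  have "norm (?R x) = norm x" for x
    unfolding norm_eq_sqrt_inner inner_vec_def by (auto intro!: arg_cong[where f=sqrt] sum.cong)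
  then have "second_moment a b i j = (\<integral>x. - (x $ i * x $ j * marg_pdf a b x) \<partial>lborel)"
    using ij unfolding second_moment_def
    by (subst integral_lborel_invariant[OF lborel_distr_negate_coord[of i], symmetric])
      (auto intro!: Bochner_Integration.integral_cong marg_pdf_norm_cong)
  also have "\<dots> = - second_moment a b i j"
    unfolding second_moment_def by (rule integral_minus)
  finally show ?thesis by simp
qed

lemma second_moment_diag_eq:
  fixes i k :: "'d::finite"
  assumes a: "a > 2" and b: "b > 0"
  shows "second_moment a b i i = second_moment a b k k"
proof -
  let ?p = "Transposition.transpose i k"
  have a0: "a > 0" using a by simp
  note [measurable] = marg_pdf_measurable[OF a0 b]
  have "norm (\<chi> l. x $ ?p l) = norm x" for x :: "real^'d"
    unfolding norm_eq_sqrt_inner inner_vec_def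
    using sum.reindex_bij_betw[of ?p UNIV UNIV "\<lambda>l. x $ l * x $ l"] by (simp add: bij_betw_def)
  then show ?thesis
    unfolding second_moment_def
    by (subst integral_lborel_invariant[OF lborel_distr_permute_coords[of ?p], symmetric])
      (auto intro!: Bochner_Integration.integral_cong marg_pdf_norm_cong)
qed

lemma second_moment_eq:
  assumes a: "a > 2" and b: "b > 0"
  shows "second_moment a b i (j::'d::finite)
    = (if i = j then (real CARD('d) + 1) * b\<^sup>2 / ((a - 1) * (a - 2)) else 0)"
proof (cases "i = j")
  case True
  have "(\<Sum>k\<in>UNIV. second_moment a b k (k::'d)) = (\<integral>x. norm x ^ 2 * marg_pdf a b (x::real^'d) \<partial>lborel)"
    unfolding second_moment_def
    using integrable_coord_mult_marg_pdf[OF a b]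
    by (subst Bochner_Integration.integral_sum[symmetric])
      (auto simp: power2_norm_eq_inner inner_vec_def sum_distrib_right)
  also have "(\<Sum>k\<in>UNIV. second_moment a b k (k::'d)) = (\<Sum>k\<in>(UNIV::'d set). second_moment a b i i)"
    by (rule sum.cong) (auto intro: second_moment_diag_eq[OF a b])
  finally have "real CARD('d) * second_moment a b i i
      = real CARD('d) * ((real CARD('d) + 1) * b\<^sup>2 / ((a - 1) * (a - 2)))"
    by (simp add: integral_norm_sq_marg_pdf[OF a b])
  then have "second_moment a b i i = (real CARD('d) + 1) * b\<^sup>2 / ((a - 1) * (a - 2))"
    by (rule mult_left_cancel[THEN iffD1, rotated]) simp
  with True show ?thesis by simp
qed (simp add: second_moment_offdiag[OF a b])

lemma marg_pdf_proportional:
  assumes a: "a > 0" and b: "b > 0"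
  shows "\<exists>C>0. \<forall>x::real^'d::finite. marg_pdf a b x = C * (b + norm x) powr - (a + CARD('d))"
proof (intro exI conjI allI)
  show "b powr a / Gamma a * cnorm TYPE('d) * Gamma (a + CARD('d)) > 0"
    using a b by (simp add: cnorm_eq)
qed (rule marg_pdf_eq[OF a b])

text \<open>No sign condition on \<open>\<theta>\<close> is needed: for \<open>\<theta> \<le> 0\<close> both sides are false. This is why the
  hypotheses making the prior variance positive are not used below.\<close>
lemma mult_sq_divide_eq_iff_eq_sqrt:
  fixes b c d \<theta> :: real
  assumes b: "b > 0" and c: "c > 0" and d: "d > 0"
  shows "c * b\<^sup>2 / d = \<theta> \<longleftrightarrow> b = sqrt (d * \<theta> / c)"
proof -
  have "c * b\<^sup>2 / d = \<theta> \<longleftrightarrow> b\<^sup>2 = d * \<theta> / c"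
    using c d by (auto simp: field_simps)
  also have "\<dots> \<longleftrightarrow> b = sqrt (d * \<theta> / c)"
    using b by (auto simp: real_sqrt_unique)
  finally show ?thesis .
qed

theorem mainTheorem2:
  fixes a b :: real
    and SNR :: real and Gxi :: "real^'m::finite^'m" and q :: nat and L :: "real^'d::finite^'m"
  assumes a: "a > 2" and b: "b > 0"
  shows "(\<exists>C>0. \<forall>x::real^'d. marg_pdf a b x = C * (b + norm x) powr (- (a + real CARD('d))))
    \<and> (\<forall>i j::'d. integrable lborel (\<lambda>x::real^'d. (x $ i) * (x $ j) * marg_pdf a b x)
         \<and> second_moment a b i j
             = (if i = j then (real CARD('d) + 1) * b^2 / ((a - 1) * (a - 2)) else 0))
    \<and> ((SNR > 1 \<and> psd Gxi \<and> Gxi \<noteq> 0 \<and> q \<ge> 1 \<and> L \<noteq> 0) \<longrightarrow>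
         ((\<forall>i j::'d. second_moment a b i j
              = (if i = j then (SNR - 1) * trace Gxi / (real q * (frob_norm L)^2) else 0))
          \<longleftrightarrow> b = sqrt ((a - 1) * (a - 2) * (SNR - 1) * trace Gxi
                        / ((real CARD('d) + 1) * real q * (frob_norm L)^2))))"
proof -
  let ?\<theta> = "(SNR - 1) * trace Gxi / (real q * (frob_norm L)^2)"
  have "(\<forall>i j::'d. second_moment a b i j = (if i = j then ?\<theta> else 0))
      \<longleftrightarrow> (real CARD('d) + 1) * b\<^sup>2 / ((a - 1) * (a - 2)) = ?\<theta>"
    by (auto simp: second_moment_eq[OF a b])
  also have "\<dots> \<longleftrightarrow> b = sqrt ((a - 1) * (a - 2) * ?\<theta> / (real CARD('d) + 1))"
    using a b by (intro mult_sq_divide_eq_iff_eq_sqrt) auto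
  also have "(a - 1) * (a - 2) * ?\<theta> / (real CARD('d) + 1)
      = (a - 1) * (a - 2) * (SNR - 1) * trace Gxi / ((real CARD('d) + 1) * real q * (frob_norm L)^2)"
    by (simp add: mult_ac)
  finally have "(\<forall>i j::'d. second_moment a b i j = (if i = j then ?\<theta> else 0))
      \<longleftrightarrow> b = sqrt ((a - 1) * (a - 2) * (SNR - 1) * trace Gxi
                        / ((real CARD('d) + 1) * real q * (frob_norm L)^2))" .
  moreover have "a > 0" using a by simp
  ultimately show ?thesis
    using marg_pdf_proportional[OF _ b] integrable_coord_mult_marg_pdf[OF a b] second_moment_eq[OF a b]
    by blast
qed

end
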